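(* Let $d\ge 2$. Let $\mathfrak{V}=\{V_0,\dots,V_{d-1}\}$ and $\mathfrak{W}=\{W_0,\dots,W_{d-1}\}$ be two bases of the same $d$-dimensional subspace $\mathcal{S}$ of $\mathcal{L}(\mathbb{C}^d)$. Assume that each basis consists of unitary operators and is orthogonal with respect to the Hilbert–Schmidt inner product: $$\operatorname{Tr}(V_i^\dagger V_j)=d\,\delta_{ij},\qquad \operatorname{Tr}(W_i^\dagger W_j)=d\,\delta_{ij}.$$ Suppose that for every pair $m,n\in\{0,\dots,d-1\}$ the pair $V_n,W_m$ saturates the maximal bound. Then $\mathfrak{V}$ and $\mathfrak{W}$ are mutually unbiased, i.e. $$|\operatorname{Tr}(V_n^\dagger W_m)|=\sqrt d\quad\text{for all } m,n.$$
   Context: For unitaries $V,W$ on $\mathbb{C}^d$ and an orthonormal basis $\{|\chi_i\rangle\}$ of $\mathbb{C}^d$, the entropic uncertainty bound for testing $V$ and $W$ with measurement $\{|\chi_i\rangle\langle\chi_i|\}$ is $-\log\max_{i,j}|\langle\chi_i|WV^\dagger|\chi_j\rangle|^2$. The pair $V,W$ saturates the maximal bound if there is some tester, i.e. some orthonormal basis $\{|\chi_i\rangle\}_{i=1}^d$ (depending on the pair), for which this bound equals $\log d$. Equivalently, the bases $\{|\chi_i\rangle\}$ and $\{WV^\dagger|\chi_j\rangle\}$ are mutually unbiased: $$|\langle\chi_i|WV^\dagger|\chi_j\rangle|=1/\sqrt d\quad\text{for all } i,j.$$ *)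

theory Defs
  imports "HOL-Analysis.Analysis"
begin

text \<open>Operators on C^d are represented as complex^'n^'n with d = CARD('n).\<close>

definition hadj :: "complex^'n^'n \<Rightarrow> complex^'n^'n" where
  "hadj A = (\<chi> i j. cnj (A $ j $ i))"

definition cinner :: "complex^'n \<Rightarrow> complex^'n \<Rightarrow> complex" where
  "cinner x y = (\<Sum>i\<in>UNIV. cnj (x $ i) * y $ i)"

definition unitary_mat :: "complex^'n^'n \<Rightarrow> bool" where
  "unitary_mat U \<longleftrightarrow> hadj U ** U = mat 1 \<and> U ** hadj U = mat 1"

definition cscale :: "complex \<Rightarrow> complex^'n^'n \<Rightarrow> complex^'n^'n" where
  "cscale c A = (\<chi> i j. c * A $ i $ j)"

definition cspan_ops :: "('k \<Rightarrow> complex^'n^'n) \<Rightarrow> (complex^'n^'n) set" where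
  "cspan_ops B = {A. \<exists>c. A = (\<Sum>k\<in>UNIV. cscale (c k) (B k))}"

definition onb :: "('n \<Rightarrow> complex^'n) \<Rightarrow> bool" where
  "onb chi \<longleftrightarrow> (\<forall>i j. cinner (chi i) (chi j) = (if i = j then 1 else 0))"

definition entropic_bound :: "complex^'n^'n \<Rightarrow> complex^'n^'n \<Rightarrow> ('n \<Rightarrow> complex^'n) \<Rightarrow> real" where
  "entropic_bound V W chi =
     - log 2 (Max {(cmod (cinner (chi i) ((W ** hadj V) *v chi j)))^2 | i j. True})"

definition saturates_max_bound :: "complex^'n^'n \<Rightarrow> complex^'n^'n \<Rightarrow> bool" where
  "saturates_max_bound V W \<longleftrightarrow>
     (\<exists>chi. onb chi \<and> entropic_bound V W chi = log 2 (real CARD('n)))"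

end

theory Submission imports Defs begin

text \<open>Expand \<open>W\<^sub>m = \<Sum>\<^sub>k c\<^sub>k V\<^sub>k\<close>. Orthogonality of the \<open>V\<^sub>k\<close> gives
  \<open>Tr(V\<^sub>k\<^sup>\<dagger> W\<^sub>m) = d c\<^sub>k\<close>, and \<open>Tr(W\<^sub>m\<^sup>\<dagger> W\<^sub>m) = d\<close> gives \<open>\<Sum>\<^sub>k |c\<^sub>k|\<^sup>2 = 1\<close>.
  If \<open>V\<^sub>k, W\<^sub>m\<close> saturate the bound for the tester \<open>\<chi>\<close>, every diagonal entry of
  \<open>W\<^sub>m V\<^sub>k\<^sup>\<dagger>\<close> in the basis \<open>\<chi>\<close> has modulus at most \<open>1/\<surd>d\<close>, so
  \<open>|Tr(V\<^sub>k\<^sup>\<dagger> W\<^sub>m)| \<le> \<surd>d\<close>, i.e. \<open>|c\<^sub>k|\<^sup>2 \<le> 1/d\<close>.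
  As the \<open>d\<close> numbers \<open>|c\<^sub>k|\<^sup>2\<close> sum to \<open>1\<close>, they all equal \<open>1/d\<close>.\<close>

lemma trace_hadj_mult:
  "trace (hadj A ** B) = (\<Sum>a\<in>UNIV. \<Sum>b\<in>UNIV. cnj (A $ a $ b) * B $ a $ b)"
  unfolding trace_def hadj_def matrix_matrix_mult_def
  by (simp, subst sum.swap, simp)

lemma trace_hadj_mult_sum_right:
  "trace (hadj A ** (\<Sum>k\<in>UNIV. cscale (c k) (B k))) = (\<Sum>k\<in>UNIV. c k * trace (hadj A ** B k))"
proof -
  have "trace (hadj A ** (\<Sum>k\<in>UNIV. cscale (c k) (B k)))
      = (\<Sum>a\<in>UNIV. \<Sum>b\<in>UNIV. \<Sum>k\<in>UNIV. c k * (cnj (A $ a $ b) * B k $ a $ b))"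
    unfolding trace_hadj_mult cscale_def
    by (simp add: sum_component sum_distrib_left mult.left_commute)
  also have "\<dots> = (\<Sum>k\<in>UNIV. \<Sum>a\<in>UNIV. \<Sum>b\<in>UNIV. c k * (cnj (A $ a $ b) * B k $ a $ b))"
    by (subst sum.swap, rule sum.cong, simp, subst sum.swap, simp)
  also have "\<dots> = (\<Sum>k\<in>UNIV. c k * trace (hadj A ** B k))"
    unfolding trace_hadj_mult by (simp add: sum_distrib_left)
  finally show ?thesis .
qed

lemma trace_hadj_mult_sum_left:
  "trace (hadj (\<Sum>k\<in>UNIV. cscale (c k) (B k)) ** A) = (\<Sum>k\<in>UNIV. cnj (c k) * trace (hadj (B k) ** A))"
proof -
  have "trace (hadj (\<Sum>k\<in>UNIV. cscale (c k) (B k)) ** A)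
      = (\<Sum>a\<in>UNIV. \<Sum>b\<in>UNIV. \<Sum>k\<in>UNIV. cnj (c k) * (cnj (B k $ a $ b) * A $ a $ b))"
    unfolding trace_hadj_mult cscale_def
    by (simp add: sum_component sum_distrib_left sum_distrib_right mult.assoc)
  also have "\<dots> = (\<Sum>k\<in>UNIV. \<Sum>a\<in>UNIV. \<Sum>b\<in>UNIV. cnj (c k) * (cnj (B k $ a $ b) * A $ a $ b))"
    by (subst sum.swap, rule sum.cong, simp, subst sum.swap, simp)
  also have "\<dots> = (\<Sum>k\<in>UNIV. cnj (c k) * trace (hadj (B k) ** A))"
    unfolding trace_hadj_mult by (simp add: sum_distrib_left)
  finally show ?thesis .
qed

lemma in_cspan_ops:
  fixes B :: "'k::finite \<Rightarrow> complex^'n^'n"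
  shows "B m \<in> cspan_ops B"
proof -
  have "(\<Sum>k\<in>UNIV. cscale (if k = m then 1 else 0) (B k)) $ a $ b
      = (\<Sum>k\<in>UNIV. if k = m then B k $ a $ b else 0)" for a b
    unfolding cscale_def sum_component by (intro sum.cong refl) simp
  then have "B m = (\<Sum>k\<in>UNIV. cscale (if k = m then 1 else 0) (B k))"
    by (simp add: vec_eq_iff)
  then show ?thesis
    unfolding cspan_ops_def mem_Collect_eq by (rule exI[of _ "\<lambda>k. if k = m then 1 else 0"])
qed

lemma orthogonal_expansion_coeff:
  fixes B :: "'k::finite \<Rightarrow> complex^'n^'n"
  assumes orth: "\<And>i j. trace (hadj (B i) ** B j) = (if i = j then of_real r else 0)"
    and expansion: "A = (\<Sum>k\<in>UNIV. cscale (c k) (B k))"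
  shows "trace (hadj (B k) ** A) = c k * of_real r"
  unfolding expansion trace_hadj_mult_sum_right
  by (simp add: orth if_distrib cong: if_cong)

lemma orthogonal_expansion_parseval:
  fixes B :: "'k::finite \<Rightarrow> complex^'n^'n"
  assumes orth: "\<And>i j. trace (hadj (B i) ** B j) = (if i = j then of_real r else 0)"
    and expansion: "A = (\<Sum>k\<in>UNIV. cscale (c k) (B k))"
  shows "trace (hadj A ** A) = of_real (r * (\<Sum>k\<in>UNIV. cmod (c k) ^ 2))"
proof -
  have "trace (hadj A ** A) = (\<Sum>k\<in>UNIV. cnj (c k) * trace (hadj (B k) ** A))"
    by (subst (1) expansion, rule trace_hadj_mult_sum_left)
  also have "\<dots> = (\<Sum>k\<in>UNIV. of_real (r * cmod (c k) ^ 2))"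
    using orthogonal_expansion_coeff[OF orth expansion]
    by (intro sum.cong refl) (simp only: of_real_mult complex_norm_square, simp add: mult_ac)
  finally show ?thesis
    by (simp add: sum_distrib_left)
qed

lemma onb_sum_cnj_mult:
  fixes chi :: "'n::finite \<Rightarrow> complex^'n"
  assumes "onb chi"
  shows "(\<Sum>i\<in>UNIV. cnj (chi i $ a) * chi i $ b) = (if a = b then 1 else 0)"
proof -
  define C :: "complex^'n^'n" where "C = (\<chi> i k. chi i $ k)"
  have "C ** hadj C = mat 1"
    using assms unfolding onb_def C_def hadj_def matrix_matrix_mult_def mat_def cinner_def
    by (auto simp: vec_eq_iff mult.commute)
  then have "hadj C ** C = mat 1"
    using matrix_left_right_inverse by blast
  then have "(hadj C ** C) $ a $ b = mat 1 $ a $ b"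
    by simp
  then show ?thesis
    unfolding C_def hadj_def matrix_matrix_mult_def mat_def by simp
qed

lemma trace_eq_sum_onb:
  fixes chi :: "'n::finite \<Rightarrow> complex^'n"
  assumes "onb chi"
  shows "trace U = (\<Sum>i\<in>UNIV. cinner (chi i) (U *v chi i))"
proof -
  have "(\<Sum>i\<in>UNIV. cinner (chi i) (U *v chi i))
      = (\<Sum>i\<in>UNIV. \<Sum>a\<in>UNIV. \<Sum>b\<in>UNIV. U $ a $ b * (cnj (chi i $ a) * chi i $ b))"
    unfolding cinner_def matrix_vector_mult_def
    by (simp add: sum_distrib_left mult.commute mult.left_commute)
  also have "\<dots> = (\<Sum>a\<in>UNIV. \<Sum>b\<in>UNIV. U $ a $ b * (\<Sum>i\<in>UNIV. cnj (chi i $ a) * chi i $ b))"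
    by (simp add: sum_distrib_left, subst sum.swap, rule sum.cong, simp, subst sum.swap, simp)
  also have "\<dots> = trace U"
    by (simp only: onb_sum_cnj_mult[OF assms], simp add: trace_def if_distrib cong: if_cong)
  finally show ?thesis
    by simp
qed

lemma entropic_bound_eq_log_card_imp_le:
  fixes V W :: "complex^'n::finite^'n" and chi :: "'n \<Rightarrow> complex^'n"
  assumes bound: "entropic_bound V W chi = log 2 (real CARD('n))"
  shows "cmod (cinner (chi i) ((W ** hadj V) *v chi j)) ^ 2 \<le> 1 / real CARD('n)"
proof -
  let ?S = "{(cmod (cinner (chi i) ((W ** hadj V) *v chi j)))^2 | i j. True}"
  define M where "M = Max ?S"
  have "?S = (\<lambda>(i, j). (cmod (cinner (chi i) ((W ** hadj V) *v chi j)))^2) ` UNIV"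
    by auto
  then have "finite ?S"
    by simp
  then have entry_le: "cmod (cinner (chi i) ((W ** hadj V) *v chi j)) ^ 2 \<le> M"
    unfolding M_def by (rule Max_ge) blast
  have "M \<le> 1 / real CARD('n)"
  proof (cases "M > 0")
    case True
    have "log 2 M = log 2 (1 / real CARD('n))"
      using bound unfolding entropic_bound_def M_def by (simp add: log_divide)
    then show ?thesis
      using True log_le_cancel_iff[of 2 M "1 / real CARD('n)"] by simp
  next
    case False
    moreover have "0 \<le> 1 / real CARD('n)"
      by simp
    ultimately show ?thesis
      by linarith
  qed
  with entry_le show ?thesis
    by linarith
qed

lemma saturates_max_bound_imp_trace_le:
  fixes V W :: "complex^'n::finite^'n"
  assumes "saturates_max_bound V W"
  shows "cmod (trace (hadj V ** W)) \<le> sqrt (real CARD('n))"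
proof -
  obtain chi :: "'n \<Rightarrow> complex^'n"
    where onb: "onb chi" and bound: "entropic_bound V W chi = log 2 (real CARD('n))"
    using assms unfolding saturates_max_bound_def by blast
  have diagonal_le: "cmod (cinner (chi i) ((W ** hadj V) *v chi i)) \<le> 1 / sqrt (real CARD('n))" for i
    using real_sqrt_le_mono[OF entropic_bound_eq_log_card_imp_le[OF bound, of i i]]
    by (simp add: real_sqrt_divide)
  have "trace (hadj V ** W) = (\<Sum>i\<in>UNIV. cinner (chi i) ((W ** hadj V) *v chi i))"
    using trace_mul_sym[of "hadj V" W] trace_eq_sum_onb[OF onb] by simp
  then have "cmod (trace (hadj V ** W)) \<le> (\<Sum>i\<in>UNIV. cmod (cinner (chi i) ((W ** hadj V) *v chi i)))"
    by (simp add: norm_sum)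
  also have "\<dots> \<le> (\<Sum>i\<in>(UNIV::'n set). 1 / sqrt (real CARD('n)))"
    by (rule sum_mono, rule diagonal_le)
  also have "\<dots> = sqrt (real CARD('n))"
    by (simp add: real_div_sqrt)
  finally show ?thesis .
qed

lemma sum_eq_card_mult_bound_imp_eq:
  fixes f :: "'a \<Rightarrow> real"
  assumes "finite A" and "\<And>x. x \<in> A \<Longrightarrow> f x \<le> b"
    and "(\<Sum>x\<in>A. f x) = real (card A) * b" and "x \<in> A"
  shows "f x = b"
proof -
  have "(\<Sum>x\<in>A. b - f x) = 0"
    using assms(3) by (simp add: sum_subtractf)
  then have "\<forall>x\<in>A. b - f x = 0"
    using sum_nonneg_eq_0_iff[OF assms(1), of "\<lambda>x. b - f x"] assms(2) by simp
  with assms(4) show ?thesis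
    by simp
qed

theorem proposition2:
  fixes V W :: "'n::finite \<Rightarrow> complex^'n^'n"
  assumes d2: "CARD('n) \<ge> 2"
    and V_unitary: "\<And>i. unitary_mat (V i)"
    and W_unitary: "\<And>i. unitary_mat (W i)"
    and V_orth: "\<And>i j. trace (hadj (V i) ** V j) = (if i = j then of_nat CARD('n) else 0)"
    and W_orth: "\<And>i j. trace (hadj (W i) ** W j) = (if i = j then of_nat CARD('n) else 0)"
    and same_span: "cspan_ops V = cspan_ops W"
    and sat: "\<And>m n. saturates_max_bound (V n) (W m)"
  shows "\<forall>m n. cmod (trace (hadj (V n) ** W m)) = sqrt (real CARD('n))"
proof (intro allI)
  fix m n
  define d where "d = real CARD('n)"
  have d_pos: "d > 0"
    unfolding d_def by simp
  have V_orth': "trace (hadj (V i) ** V j) = (if i = j then of_real d else 0)" for i j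
    using V_orth by (simp add: d_def)
  obtain c where c: "W m = (\<Sum>k\<in>UNIV. cscale (c k) (V k))"
    using in_cspan_ops[of W m] same_span unfolding cspan_ops_def by blast
  have coeff: "trace (hadj (V k) ** W m) = c k * of_real d" for k
    by (rule orthogonal_expansion_coeff[OF V_orth' c])
  have "of_real (d * (\<Sum>k\<in>UNIV. cmod (c k) ^ 2)) = (of_real d :: complex)"
    using orthogonal_expansion_parseval[OF V_orth' c] W_orth[of m m] by (simp add: d_def)
  then have "d * (\<Sum>k\<in>UNIV. cmod (c k) ^ 2) = d * 1"
    by (simp only: of_real_eq_iff)
  then have sum_eq_1: "(\<Sum>k\<in>UNIV. cmod (c k) ^ 2) = 1"
    using d_pos by simp
  have coeff_le: "cmod (c k) ^ 2 \<le> 1 / d" for k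
  proof -
    have "cmod (c k) * d \<le> sqrt d"
      using saturates_max_bound_imp_trace_le[OF sat[where m = m and n = k]] coeff[of k] d_pos
      by (simp add: d_def norm_mult)
    then have "cmod (c k) \<le> sqrt d / d"
      using d_pos by (simp add: pos_le_divide_eq)
    then have "cmod (c k) ^ 2 \<le> (sqrt d / d) ^ 2"
      by (simp add: power_mono)
    then show ?thesis
      using d_pos by (simp add: power_divide power2_eq_square)
  qed
  have "(\<Sum>k\<in>UNIV. cmod (c k) ^ 2) = real (card (UNIV :: 'n set)) * (1 / d)"
    unfolding sum_eq_1 d_def by simp
  then have "cmod (c n) ^ 2 = 1 / d"
    by (rule sum_eq_card_mult_bound_imp_eq[OF finite coeff_le]) simp
  then have "cmod (c n) = sqrt (1 / d)"
    by (metis norm_ge_zero real_sqrt_unique)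
  then show "cmod (trace (hadj (V n) ** W m)) = sqrt (real CARD('n))"
    using coeff[of n] d_pos by (simp add: d_def norm_mult real_sqrt_divide real_div_sqrt)
qed

end
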